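(* Let $p$ be a prime, $n$ a positive integer, $s\ge 0$ an integer, and $d$ a positive integer with $\gcd(d,p^n-1)=1$. Let $F:\mathbb{F}_{p^n}\to\mathbb{F}_{p^n}$, $F(x)=x^d$. Suppose the cross-correlation function $\theta(\tau)$, $0\le\tau\le p^n-2$, of the $p$-ary $m$-sequences $u$ and $v$ that differ by decimation $d$ takes exactly the three values $-1$, $-1+p^{(n+s)/2}$ and $-1-p^{(n+s)/2}$. Then $F$ is a vectorial $s$-plateaued function, i.e. $|\widehat{F_b}(a)|\in\{0,p^{(n+s)/2}\}$ for all $b\in\mathbb{F}_{p^n}^*$ and $a\in\mathbb{F}_{p^n}$.
   Context: $\zeta_p=e^{2\pi i/p}$, $Tr_n(z)=\sum_{i=0}^{n-1}z^{p^i}$. Let $\sigma$ be a primitive element of $\mathbb{F}_{p^n}$; the $m$-sequence is $u(t)=Tr_n(\sigma^t)$ and its decimation is $v(t)=u(dt)$; the cross-correlation is $\theta(\tau)=\sum_{t=0}^{p^n-2}\zeta_p^{u(t+\tau)-v(t)}$. For $b\in\mathbb{F}_{p^n}^*$, $F_b(x)=Tr_n(bF(x))$ and $\widehat{F_b}(a)=\sum_{x\in\mathbb{F}_{p^n}}\zeta_p^{F_b(x)-Tr_n(ax)}$. *)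

theory Defs
  imports Complex_Main "HOL-Computational_Algebra.Primes"
begin

definition tr :: "nat \<Rightarrow> nat \<Rightarrow> 'a::field \<Rightarrow> 'a" where
  "tr p n z = (\<Sum>i<n. z ^ (p ^ i))"

text \<open>The trace lies in the prime field F_p; identify it with its representative in {0..p-1}.\<close>
definition trval :: "nat \<Rightarrow> nat \<Rightarrow> 'a::field \<Rightarrow> int" where
  "trval p n z = (THE k. 0 \<le> k \<and> k < int p \<and> of_int k = tr p n z)"

definition zeta :: "nat \<Rightarrow> int \<Rightarrow> complex" where
  "zeta p k = exp (2 * pi * \<i> * of_int k / of_nat p)"

definition primitive_element :: "'a::field \<Rightarrow> bool" where
  "primitive_element \<sigma> \<longleftrightarrow> \<sigma> \<noteq> 0 \<and> (\<forall>x. x \<noteq> 0 \<longrightarrow> (\<exists>t::nat. x = \<sigma> ^ t))"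

definition mseq :: "nat \<Rightarrow> nat \<Rightarrow> 'a::field \<Rightarrow> nat \<Rightarrow> int" where
  "mseq p n \<sigma> t = trval p n (\<sigma> ^ t)"

definition crosscorr :: "nat \<Rightarrow> nat \<Rightarrow> 'a::field \<Rightarrow> nat \<Rightarrow> nat \<Rightarrow> complex" where
  "crosscorr p n \<sigma> d \<tau> = (\<Sum>t<p ^ n - 1. zeta p (mseq p n \<sigma> (t + \<tau>) - mseq p n \<sigma> (d * t)))"

definition walsh :: "nat \<Rightarrow> nat \<Rightarrow> nat \<Rightarrow> 'a::{field,finite} \<Rightarrow> 'a \<Rightarrow> complex" where
  "walsh p n d b a = (\<Sum>x\<in>UNIV. zeta p (trval p n (b * x ^ d) - trval p n (a * x)))"

end

theory Submission
  imports Defs "HOL-Number_Theory.Residues" "HOL-Computational_Algebra.Polynomial"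
begin

(* Let chi(y) = zeta_p^Tr(y) be the canonical additive character of GF(p^n). Enumerating the
   nonzero elements as sigma^t turns the cross-correlation into
   theta(tau) = sum_{y <> 0} chi(y sigma^tau - y^d).
   As gcd(d, p^n - 1) = 1, every b <> 0 is a d-th power beta^d, and substituting y = beta x
   shows that the Walsh coefficient of F_b at a <> 0 is the complex conjugate of
   1 + theta(tau), where sigma^tau = a / beta; at a = 0 it is sum_y chi(y) = 0.
   So its modulus is 0 or |1 + theta(tau)|, which the three-valuedness of theta confines to
   {0, p^((n+s)/2)}. *)

lemma CHAR_eq_if_card_eq_prime_power:
  assumes "prime p" "card (UNIV :: 'a::{field,finite} set) = p ^ n"
  shows "CHAR('a) = p"
proof -
  have "prime CHAR('a)"
    by (simp add: finite_imp_CHAR_pos prime_CHAR_semidom)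
  moreover have "CHAR('a) dvd p ^ n"
    using CHAR_dvd_CARD[where 'a='a] assms(2) by simp
  ultimately have "CHAR('a) dvd p"
    using prime_dvd_power by blast
  then show ?thesis
    using \<open>prime CHAR('a)\<close> assms(1) by (simp add: primes_dvd_imp_eq)
qed

lemma card_UNIV_field_ge_2: "card (UNIV :: 'a::{field,finite} set) \<ge> 2"
proof -
  have "card {0::'a, 1} \<le> card (UNIV :: 'a set)"
    by (intro card_mono) auto
  thus ?thesis by simp
qed

lemma power_card_minus_one_eq_1:
  fixes x :: "'a::{field,finite}"
  assumes "x \<noteq> 0"
  shows "x ^ (card (UNIV :: 'a set) - 1) = 1"
proof -
  let ?U = "UNIV - {0::'a}"
  have "prod (\<lambda>y. x * y) ?U = prod id ?U"
    by (rule prod.reindex_bij_witness[of _ "\<lambda>y. y / x" "\<lambda>y. x * y"]) (use assms in auto)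
  moreover have "prod (\<lambda>y. x * y) ?U = x ^ card ?U * prod id ?U"
    by (simp add: prod.distrib)
  moreover have "prod id ?U \<noteq> 0"
    by simp
  ultimately show ?thesis
    by (simp add: card_Diff_singleton)
qed

lemma power_card_eq_self:
  fixes x :: "'a::{field,finite}"
  shows "x ^ card (UNIV :: 'a set) = x"
proof (cases "x = 0")
  case False
  obtain k where k: "card (UNIV :: 'a set) = Suc k"
    using card_UNIV_field_ge_2[where 'a='a] by (cases "card (UNIV :: 'a set)") auto
  then show ?thesis
    using power_card_minus_one_eq_1[OF False] by simp
qed (use card_UNIV_field_ge_2[where 'a='a] in simp)

lemma power_mod_card_minus_one:
  fixes x :: "'a::{field,finite}"
  assumes "x \<noteq> 0"
  shows "x ^ (m mod (card (UNIV :: 'a set) - 1)) = x ^ m"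
proof -
  let ?q = "card (UNIV :: 'a set) - 1"
  have "x ^ m = x ^ (?q * (m div ?q) + m mod ?q)"
    by simp
  also have "\<dots> = (x ^ ?q) ^ (m div ?q) * x ^ (m mod ?q)"
    by (simp only: power_add power_mult)
  finally show ?thesis
    using power_card_minus_one_eq_1[OF assms] by simp
qed

lemma primitive_element_bij_betw:
  fixes \<sigma> :: "'a::{field,finite}"
  assumes "primitive_element \<sigma>"
  shows "bij_betw (\<lambda>t. \<sigma> ^ t) {..<card (UNIV :: 'a set) - 1} (UNIV - {0})"
proof -
  let ?q = "card (UNIV :: 'a set) - 1"
  have "\<sigma> \<noteq> 0"
    using assms unfolding primitive_element_def by blast
  have "(\<lambda>t. \<sigma> ^ t) ` {..<?q} = UNIV - {0}"
  proof
    show "(\<lambda>t. \<sigma> ^ t) ` {..<?q} \<subseteq> UNIV - {0}"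
      using \<open>\<sigma> \<noteq> 0\<close> by auto
  next
    show "UNIV - {0} \<subseteq> (\<lambda>t. \<sigma> ^ t) ` {..<?q}"
    proof
      fix x :: 'a
      assume "x \<in> UNIV - {0}"
      then obtain t where "x = \<sigma> ^ t"
        using assms unfolding primitive_element_def by blast
      then have "x = \<sigma> ^ (t mod ?q)"
        using power_mod_card_minus_one[OF \<open>\<sigma> \<noteq> 0\<close>] by simp
      moreover have "t mod ?q < ?q"
        using card_UNIV_field_ge_2[where 'a='a] by simp
      ultimately show "x \<in> (\<lambda>t. \<sigma> ^ t) ` {..<?q}"
        by blast
    qed
  qed
  moreover have "card (UNIV - {0::'a}) = ?q"
    by (simp add: card_Diff_singleton)
  ultimately show ?thesis
    by (simp add: bij_betw_def eq_card_imp_inj_on)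
qed

lemma bij_power_if_coprime:
  assumes "coprime d (card (UNIV :: 'a::{field,finite} set) - 1)" "d > 0"
  shows "bij (\<lambda>x::'a. x ^ d)"
proof -
  let ?q = "card (UNIV :: 'a set) - 1"
  obtain e where e: "[d * e = 1] (mod ?q)"
    using cong_solve_coprime_nat[OF assms(1)] by auto
  have "(x ^ d) ^ (e + ?q) = x" for x :: 'a
  proof (cases "x = 0")
    case True
    then show ?thesis
      using assms(2) card_UNIV_field_ge_2[where 'a='a] by simp
  next
    case False
    have "d * (e + ?q) = d * e + ?q * d"
      by (simp add: algebra_simps)
    then have "d * (e + ?q) mod ?q = 1 mod ?q"
      using e by (simp add: cong_def)
    then have "x ^ (d * (e + ?q)) = x ^ 1"
      using power_mod_card_minus_one[OF False] by metis
    then show ?thesis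
      by (simp add: power_mult)
  qed
  then have "inj (\<lambda>x::'a. x ^ d)"
    by (rule inj_on_inverseI)
  then show ?thesis
    by (simp add: bij_def finite_UNIV_inj_surj)
qed

lemma tr_add:
  fixes x y :: "'a::field"
  assumes "prime p" "CHAR('a) = p"
  shows "tr p n (x + y) = tr p n x + tr p n y"
  unfolding tr_def by (simp add: sum.distrib freshmans_dream' assms)

lemma tr_0: "p > 0 \<Longrightarrow> tr p n (0::'a::field) = 0"
  unfolding tr_def by (simp add: power_0_left)

lemma tr_diff:
  fixes x y :: "'a::field"
  assumes "prime p" "CHAR('a) = p"
  shows "tr p n (x - y) = tr p n x - tr p n y"
  using tr_add[OF assms, where x="x - y" and y=y] by simp

lemma tr_uminus:
  fixes x :: "'a::field"
  assumes "prime p" "CHAR('a) = p"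
  shows "tr p n (- x) = - tr p n x"
  using tr_diff[OF assms, where x=0 and y=x] tr_0 prime_gt_0_nat[OF assms(1)] by simp

lemma tr_power_CHAR:
  fixes x :: "'a::{field,finite}"
  assumes "prime p" "CHAR('a) = p" "card (UNIV :: 'a set) = p ^ n"
  shows "tr p n x ^ p = tr p n x"
proof -
  have "tr p n x ^ p = (\<Sum>i<n. x ^ p ^ Suc i)"
    unfolding tr_def using assms(1,2)
    by (simp add: freshmans_dream_sum power_mult[symmetric] mult.commute)
  also have "\<dots> = (\<Sum>i<n. x ^ p ^ i)"
  proof (cases n)
    case (Suc m)
    let ?f = "\<lambda>i. x ^ p ^ i"
    have "?f (Suc m) = ?f 0"
      using power_card_eq_self[of x] assms(3) Suc by simp
    then show ?thesis
      unfolding Suc using sum.lessThan_Suc_shift[of ?f m] sum.lessThan_Suc[of "\<lambda>i. ?f (Suc i)" m]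
      by (simp only: add.commute)
  qed simp
  finally show ?thesis
    unfolding tr_def .
qed

lemma of_nat_power_CHAR:
  assumes "prime CHAR('a::comm_semiring_1)"
  shows "(of_nat k :: 'a) ^ CHAR('a) = of_nat k"
  using freshmans_dream_sum[OF assms refl, of "\<lambda>_. 1" "{..<k}"] by simp

text \<open>The \<open>p\<close> elements of the prime field already exhaust the at most \<open>p\<close> roots of \<open>X\<^sup>p - X\<close>.\<close>
lemma power_CHAR_fixed_imp_in_prime_field:
  fixes z :: "'a::field"
  assumes "prime p" "CHAR('a) = p" "z ^ p = z"
  shows "\<exists>k. 0 \<le> k \<and> k < int p \<and> of_int k = z"
proof -
  define S where "S = (of_nat :: nat \<Rightarrow> 'a) ` {..<p}"
  define P :: "'a poly" where "P = monom 1 p + [:0, -1:]"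
  let ?R = "{x. poly P x = 0}"
  have "p \<ge> 2"
    using assms(1) prime_ge_2_nat by blast
  then have "degree P = p"
    unfolding P_def by (subst degree_add_eq_left) (auto simp: degree_monom_eq)
  then have "P \<noteq> 0"
    using \<open>p \<ge> 2\<close> by auto
  have roots: "poly P x = 0 \<longleftrightarrow> x ^ p = x" for x
    unfolding P_def by (simp add: poly_monom)
  have "finite ?R"
    using poly_roots_finite[OF \<open>P \<noteq> 0\<close>] .
  have "(of_nat k :: 'a) ^ p = of_nat k" for k
    using of_nat_power_CHAR assms(1,2) by metis
  then have "S \<subseteq> ?R"
    unfolding S_def by (auto simp: roots)
  have "inj_on (of_nat :: nat \<Rightarrow> 'a) {..<p}"
    by (rule inj_onI) (use assms(2) in \<open>auto simp: of_nat_eq_iff_cong_CHAR cong_def\<close>)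
  then have "card S = p"
    unfolding S_def by (simp add: card_image)
  moreover have "card ?R \<le> p"
    using card_poly_roots_bound[OF \<open>P \<noteq> 0\<close>] \<open>degree P = p\<close> by simp
  ultimately have "S = ?R"
    using card_mono[OF \<open>finite ?R\<close> \<open>S \<subseteq> ?R\<close>]
    by (intro card_subset_eq \<open>finite ?R\<close> \<open>S \<subseteq> ?R\<close>) simp
  then have "z \<in> S"
    using assms(3) roots by blast
  then obtain k where "k < p" "z = of_nat k"
    unfolding S_def by blast
  then show ?thesis
    by (intro exI[of _ "int k"]) simp
qed

lemma trval_spec:
  fixes z :: "'a::{field,finite}"
  assumes "prime p" "card (UNIV :: 'a set) = p ^ n"
  shows "0 \<le> trval p n z \<and> trval p n z < int p \<and> of_int (trval p n z) = tr p n z"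
proof -
  have char: "CHAR('a) = p"
    using CHAR_eq_if_card_eq_prime_power[OF assms] .
  have unique: "j = k"
    if "0 \<le> j" "j < int p" "0 \<le> k" "k < int p" "(of_int j :: 'a) = of_int k" for j k
    using that char by (auto simp: of_int_eq_iff_cong_CHAR cong_def)
  show ?thesis
    unfolding trval_def
    by (rule theI', rule ex_ex1I)
       (use power_CHAR_fixed_imp_in_prime_field[OF assms(1) char tr_power_CHAR[OF assms(1) char assms(2)]]
          unique in auto)
qed

lemma zeta_add: "zeta p (a + b) = zeta p a * zeta p b"
  unfolding zeta_def by (simp add: exp_add[symmetric] add_divide_distrib distrib_left)

lemma zeta_0 [simp]: "zeta p 0 = 1"
  unfolding zeta_def by simp

lemma zeta_conv_cis: "zeta p a = cis (2 * pi * of_int a / real p)"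
  unfolding zeta_def by (simp add: cis_conv_exp mult_ac)

lemma cnj_zeta: "cnj (zeta p a) = zeta p (- a)"
  unfolding zeta_conv_cis cis_cnj by simp

lemma zeta_eq_1_iff:
  assumes "p > 0"
  shows "zeta p a = 1 \<longleftrightarrow> int p dvd a"
proof
  assume "zeta p a = 1"
  then have "cos (2 * pi * of_int a / real p) = 1"
    unfolding zeta_conv_cis by (metis cis.sel(1) one_complex.sel(1))
  then obtain m :: int where "2 * pi * of_int a / real p = of_int m * 2 * pi"
    using cos_one_2pi_int by blast
  then have "real_of_int a = real_of_int (m * int p)"
    using assms by (simp add: field_simps)
  then show "int p dvd a"
    by (simp only: of_int_eq_iff) simp
next
  assume "int p dvd a"
  then obtain m where "a = int p * m" ..
  then have "2 * pi * of_int a / real p = 2 * pi * of_int m"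
    using assms by simp
  then show "zeta p a = 1"
    unfolding zeta_conv_cis by simp
qed

lemma zeta_cong:
  assumes "p > 0" "[a = b] (mod int p)"
  shows "zeta p a = zeta p b"
proof -
  have "zeta p (a - b) = 1"
    using assms by (simp add: zeta_eq_1_iff cong_iff_dvd_diff)
  then show ?thesis
    using zeta_add[of p "a - b" b] by simp
qed

definition add_char :: "nat \<Rightarrow> nat \<Rightarrow> 'a::field \<Rightarrow> complex" where
  "add_char p n y = zeta p (trval p n y)"

context
  fixes p n :: nat
  assumes prime: "prime p" and card: "card (UNIV :: 'a::{field,finite} set) = p ^ n"
begin

private lemma char: "CHAR('a) = p"
  using CHAR_eq_if_card_eq_prime_power[OF prime card] .

lemma zeta_eq_add_char:
  fixes y :: 'a
  assumes "of_int k = tr p n y"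
  shows "zeta p k = add_char p n y"
proof -
  have "(of_int k :: 'a) = of_int (trval p n y)"
    using trval_spec[OF prime card, of y] assms by simp
  then have "[k = trval p n y] (mod int p)"
    using char by (simp add: of_int_eq_iff_cong_CHAR)
  then show ?thesis
    unfolding add_char_def using zeta_cong prime_gt_0_nat[OF prime] by blast
qed

lemma add_char_add: "add_char p n (x + y :: 'a) = add_char p n x * add_char p n y"
  using zeta_eq_add_char[of "trval p n x + trval p n y" "x + y"]
  by (simp add: tr_add[OF prime char] trval_spec[OF prime card] zeta_add add_char_def)

lemma zeta_diff_trval: "zeta p (trval p n x - trval p n y) = add_char p n (x - y :: 'a)"
  by (rule zeta_eq_add_char) (simp add: tr_diff[OF prime char] trval_spec[OF prime card])

lemma cnj_add_char: "cnj (add_char p n (x :: 'a)) = add_char p n (- x)"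
  unfolding add_char_def[of p n x] cnj_zeta
  by (rule zeta_eq_add_char) (simp add: tr_uminus[OF prime char] trval_spec[OF prime card])

lemma add_char_0: "add_char p n (0 :: 'a) = 1"
proof -
  have "tr p n (0 :: 'a) = 0"
    using tr_0 prime_gt_0_nat[OF prime] by blast
  then show ?thesis
    using zeta_eq_add_char[of 0 0] by simp
qed

lemma tr_not_identically_0:
  assumes "n > 0"
  shows "\<exists>y::'a. tr p n y \<noteq> 0"
proof (rule ccontr)
  assume "\<not> ?thesis"
  then have all_roots: "tr p n y = 0" for y :: 'a
    by blast
  define T :: "'a poly" where "T = (\<Sum>i<n. monom 1 (p ^ i))"
  have p2: "p \<ge> 2"
    using prime prime_ge_2_nat by blast
  have "coeff T 1 = (\<Sum>i<n. if i = 0 then 1 else 0)"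
    unfolding T_def coeff_sum coeff_monom using p2
    by (intro sum.cong) (auto simp: power_eq_1_iff)
  then have "coeff T 1 = 1"
    using assms by simp
  then have "T \<noteq> 0"
    by auto
  have "degree T < p ^ n"
    unfolding T_def using p2
    by (intro degree_sum_less) (auto intro: le_less_trans[OF degree_monom_le] power_strict_increasing)
  have "poly T y = tr p n y" for y
    unfolding T_def tr_def by (simp add: poly_sum poly_monom)
  then have "{y. poly T y = 0} = UNIV"
    using all_roots by simp
  then have "p ^ n \<le> degree T"
    using card_poly_roots_bound[OF \<open>T \<noteq> 0\<close>] card by simp
  with \<open>degree T < p ^ n\<close> show False
    by simp
qed

lemma add_char_nontrivial:
  assumes "n > 0"
  shows "\<exists>y::'a. add_char p n y \<noteq> 1"
proof -
  obtain y :: 'a where "tr p n y \<noteq> 0"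
    using tr_not_identically_0[OF assms] by blast
  then have "0 < trval p n y" "trval p n y < int p"
    using trval_spec[OF prime card, of y] by (auto simp: order_le_less)
  then have "\<not> int p dvd trval p n y"
    using zdvd_not_zless by blast
  then show ?thesis
    unfolding add_char_def using zeta_eq_1_iff prime_gt_0_nat[OF prime] by blast
qed

lemma sum_add_char:
  assumes "n > 0"
  shows "(\<Sum>y\<in>UNIV. add_char p n (y :: 'a)) = 0"
proof -
  obtain y0 :: 'a where y0: "add_char p n y0 \<noteq> 1"
    using add_char_nontrivial[OF assms] by blast
  let ?S = "\<Sum>y\<in>UNIV. add_char p n (y :: 'a)"
  have "?S = (\<Sum>y\<in>UNIV. add_char p n (y + y0))"
    by (rule sum.reindex_bij_witness[of _ "\<lambda>y. y + y0" "\<lambda>y. y - y0"]) auto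
  also have "\<dots> = ?S * add_char p n y0"
    by (simp add: add_char_add sum_distrib_right)
  finally have "?S * (1 - add_char p n y0) = 0"
    by (simp add: algebra_simps)
  with y0 show ?thesis
    by simp
qed

lemma crosscorr_eq_sum_add_char:
  assumes "primitive_element \<sigma>"
  shows "crosscorr p n \<sigma> d \<tau> = (\<Sum>y\<in>UNIV - {0}. add_char p n (y * \<sigma> ^ \<tau> - y ^ d :: 'a))"
proof -
  have "crosscorr p n \<sigma> d \<tau> =
        (\<Sum>t<card (UNIV :: 'a set) - 1. add_char p n (\<sigma> ^ t * \<sigma> ^ \<tau> - (\<sigma> ^ t) ^ d))"
    unfolding crosscorr_def mseq_def zeta_diff_trval card
    by (simp add: power_add power_mult mult.commute[of d])
  also have "\<dots> = (\<Sum>y\<in>UNIV - {0}. add_char p n (y * \<sigma> ^ \<tau> - y ^ d))"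
    by (rule sum.reindex_bij_betw[OF primitive_element_bij_betw[OF assms]])
  finally show ?thesis .
qed

lemma walsh_eq_sum_add_char:
  "walsh p n d b a = (\<Sum>x\<in>UNIV. add_char p n (b * x ^ d - a * x :: 'a))"
  unfolding walsh_def zeta_diff_trval ..

lemma walsh_at_0:
  fixes b :: 'a
  assumes "n > 0" "b \<noteq> 0" "bij (\<lambda>x::'a. x ^ d)"
  shows "walsh p n d b 0 = 0"
proof -
  have "walsh p n d b 0 = (\<Sum>x\<in>UNIV. add_char p n (b * x ^ d))"
    unfolding walsh_eq_sum_add_char by simp
  also have "\<dots> = (\<Sum>y\<in>UNIV. add_char p n (b * y))"
    using sum.reindex_bij_betw[OF assms(3), of "\<lambda>y. add_char p n (b * y)"] .
  also have "\<dots> = (\<Sum>z\<in>UNIV. add_char p n (z :: 'a))"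
    by (rule sum.reindex_bij_witness[of _ "\<lambda>z. z / b" "\<lambda>y. b * y"]) (use assms(2) in auto)
  also have "\<dots> = 0"
    using sum_add_char[OF assms(1)] .
  finally show ?thesis .
qed

lemma cmod_walsh_eq_cmod_crosscorr:
  fixes \<sigma> b a :: 'a
  assumes "primitive_element \<sigma>" "d > 0" "bij (\<lambda>x::'a. x ^ d)" "b \<noteq> 0" "a \<noteq> 0"
  shows "\<exists>\<tau> < card (UNIV :: 'a set) - 1.
           cmod (walsh p n d b a) = cmod (1 + crosscorr p n \<sigma> d \<tau>)"
proof -
  obtain \<beta> :: 'a where \<beta>: "\<beta> ^ d = b"
    using surjD[OF bij_is_surj[OF assms(3)], of b] by auto
  with assms(2,4) have "\<beta> \<noteq> 0"
    by auto
  define c where "c = a / \<beta>"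
  have "c \<in> (\<lambda>t. \<sigma> ^ t) ` {..<card (UNIV :: 'a set) - 1}"
    using assms(5) \<open>\<beta> \<noteq> 0\<close> bij_betw_imp_surj_on[OF primitive_element_bij_betw[OF assms(1)]]
    unfolding c_def by simp
  then obtain \<tau> where \<tau>: "\<tau> < card (UNIV :: 'a set) - 1" "\<sigma> ^ \<tau> = c"
    by auto
  have "walsh p n d b a = (\<Sum>y\<in>UNIV. add_char p n (y ^ d - y * c))"
    unfolding walsh_eq_sum_add_char
  proof (rule sum.reindex_bij_witness[of _ "\<lambda>y. y / \<beta>" "\<lambda>x. \<beta> * x"])
    fix x :: 'a
    show "add_char p n ((\<beta> * x) ^ d - \<beta> * x * c) = add_char p n (b * x ^ d - a * x)"
      using \<open>\<beta> \<noteq> 0\<close> \<beta> unfolding c_def by (simp add: power_mult_distrib mult.commute[of x a])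
  qed (use \<open>\<beta> \<noteq> 0\<close> in auto)
  also have "\<dots> = cnj (\<Sum>y\<in>UNIV. add_char p n (y * c - y ^ d))"
    by (simp add: cnj_add_char)
  also have "(\<Sum>y\<in>UNIV. add_char p n (y * c - y ^ d)) =
             add_char p n (0 * c - 0 ^ d) + (\<Sum>y\<in>UNIV - {0}. add_char p n (y * c - y ^ d))"
    by (rule sum.remove) auto
  also have "\<dots> = 1 + crosscorr p n \<sigma> d \<tau>"
    using assms(2) by (simp add: power_0_left add_char_0 crosscorr_eq_sum_add_char[OF assms(1)] \<tau>(2))
  finally have "cmod (walsh p n d b a) = cmod (1 + crosscorr p n \<sigma> d \<tau>)"
    by (simp only: complex_mod_cnj)
  with \<tau>(1) show ?thesis
    by blast
qed

end

theorem mainTheorem3: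
  fixes \<sigma> :: "'a::{field,finite}" and p n s d :: nat
  assumes "prime p" and "n > 0" and "card (UNIV :: 'a set) = p ^ n"
    and "d > 0" and "coprime d (p ^ n - 1)"
    and "primitive_element \<sigma>"
    and "crosscorr p n \<sigma> d ` {0 .. p ^ n - 2} =
         {-1, -1 + complex_of_real (real p powr (real (n + s) / 2)),
              -1 - complex_of_real (real p powr (real (n + s) / 2))}"
  shows "\<forall>b a. b \<noteq> (0::'a) \<longrightarrow>
           cmod (walsh p n d b a) \<in> {0, real p powr (real (n + s) / 2)}"
proof (intro allI impI)
  fix b a :: 'a
  assume "b \<noteq> 0"
  define P where "P = real p powr (real (n + s) / 2)"
  have "coprime d (card (UNIV :: 'a set) - 1)"
    using assms(3,5) by simp
  then have power_bij: "bij (\<lambda>x::'a. x ^ d)"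
    using bij_power_if_coprime assms(4) by blast
  show "cmod (walsh p n d b a) \<in> {0, P}"
  proof (cases "a = 0")
    case True
    then show ?thesis
      using walsh_at_0[OF assms(1,3,2) \<open>b \<noteq> 0\<close> power_bij] by simp
  next
    case False
    then obtain \<tau> where "\<tau> < p ^ n - 1"
      and walsh_\<tau>: "cmod (walsh p n d b a) = cmod (1 + crosscorr p n \<sigma> d \<tau>)"
      using cmod_walsh_eq_cmod_crosscorr[OF assms(1,3,6,4) power_bij \<open>b \<noteq> 0\<close>] assms(3) by auto
    then have "crosscorr p n \<sigma> d \<tau> \<in> {-1, -1 + complex_of_real P, -1 - complex_of_real P}"
      using assms(7) unfolding P_def by auto
    moreover have "P \<ge> 0"
      unfolding P_def by simp
    ultimately show ?thesis
      unfolding walsh_\<tau> by (elim insertE) auto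
  qed
qed

end
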